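(* Let $d\ge1$ and let $\mu:\mathbb{R}^d\to(0,\infty)$ be localized to the unit ball with $\sum_{a\in\mathbb{Z}^d}\mu(x-a)=1$ and $\mu(x)\ge c(1+|x|)^{-10d}$ for some $c>0$. Then there exists $C>0$ such that for every Schwartz function $K\in\mathcal{S}(\mathbb{R}^d)$, every $B\subset\mathbb{Z}^d$ and every $x\in\mathbb{R}^d$, \[ |K*\mu_B(x)|\le C\left(\int|K(y)|(1+|y|^{10d})\,dy\right)\mu_B(x). \]
   Context: A bounded function $f$ on $\mathbb{R}^d$ is localized to the unit ball if there is a constant $C$ with $|f(x)|\le C$, $|f(x)|\le C|x|^{-10d}$ and $|\nabla f(x)|\le C|x|^{-10d-1}$. $\mu_a(x)=\mu(x-a)$ and $\mu_B=\sum_{b\in B}\mu_b$. *)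

theory Defs
  imports "HOL-Analysis.Analysis"
begin

definition int_lattice :: "'a::euclidean_space set" where
  "int_lattice = {x. \<forall>i\<in>Basis. x \<bullet> i \<in> \<int>}"

text \<open>f is localized to the unit ball: bounded, |f x| <= C |x|^(-10d) and
  |grad f x| <= C |x|^(-10d-1) (the latter two for x /= 0, where the right-hand
  sides are finite).\<close>
definition localized_unit_ball :: "('a::euclidean_space \<Rightarrow> real) \<Rightarrow> bool" where
  "localized_unit_ball f \<longleftrightarrow>
     (\<exists>C. \<forall>x. \<bar>f x\<bar> \<le> C \<and>
        (x \<noteq> 0 \<longrightarrow> \<bar>f x\<bar> \<le> C * norm x powr (- real (10 * DIM('a)))) \<and>
        (x \<noteq> 0 \<longrightarrow> (\<exists>g. (f has_derivative (\<lambda>h. g \<bullet> h)) (at x) \<and>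
                         norm g \<le> C * norm x powr (- real (10 * DIM('a)) - 1))))"

definition mu_set :: "('a::euclidean_space \<Rightarrow> real) \<Rightarrow> 'a set \<Rightarrow> 'a \<Rightarrow> real" where
  "mu_set \<mu> B x = (\<Sum>\<^sub>\<infinity>b\<in>B. \<mu> (x - b))"

text \<open>Schwartz functions: smooth, and every partial derivative of every order
  (including order 0) decays faster than any power of (1+|x|).\<close>
coinductive schwartz :: "('a::euclidean_space \<Rightarrow> complex) \<Rightarrow> bool" where
  "(\<And>N::nat. \<exists>M. \<forall>x. (1 + norm x) ^ N * norm (f x) \<le> M) \<Longrightarrow>
   (\<And>x. (f has_derivative (\<lambda>h. \<Sum>i\<in>Basis. (h \<bullet> i) *\<^sub>R g i x)) (at x)) \<Longrightarrow>
   (\<And>i. i \<in> Basis \<Longrightarrow> schwartz (g i)) \<Longrightarrow> schwartz f"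

definition conv :: "('a::euclidean_space \<Rightarrow> complex) \<Rightarrow> ('a \<Rightarrow> real) \<Rightarrow> 'a \<Rightarrow> complex" where
  "conv K u x = (\<integral>y. K y * complex_of_real (u (x - y)) \<partial>lborel)"

end

theory Submission
  imports Defs
begin

text \<open>Bounded above by localization and below by hypothesis, \<mu> is comparable to (1 + |x|)^-10d,
  hence moderate: \<mu>(z - y) \<le> C (1 + |y|^10d) \<mu>(z). Summing over B passes this to \<mu>_B, and
  integrating against |K| gives the claim; the weighted integral of K is finite by Schwartz decay,
  and the partition of unity is needed only for the summability of \<mu>_B.\<close>

lemma one_plus_power_le:
  fixes t :: real
  assumes "t \<ge> 0"
  shows "(1 + t) ^ n \<le> 2 ^ n * (1 + t ^ n)"
proof (cases "t \<le> 1")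
  case True
  have "(1 + t) ^ n \<le> 2 ^ n" using True assms by (intro power_mono) auto
  also have "\<dots> \<le> 2 ^ n * (1 + t ^ n)" using assms by simp
  finally show ?thesis .
next
  case False
  have "(1 + t) ^ n \<le> (2 * t) ^ n" using False assms by (intro power_mono) auto
  also have "\<dots> = 2 ^ n * t ^ n" by (simp add: power_mult_distrib)
  also have "\<dots> \<le> 2 ^ n * (1 + t ^ n)" by simp
  finally show ?thesis .
qed

text \<open>Cover the space by the balls of radius k + 1; on the k-th one the integrand is at most
  (k + 1)^-(d+2) and the volume is of order (k + 1)^d, which leaves the summable (k + 1)^-2.\<close>
lemma integrable_inverse_one_plus_norm_power:
  "integrable lborel (\<lambda>y::'a::euclidean_space. inverse ((1 + norm y) ^ (DIM('a) + 2)))"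
proof (rule integrableI_bounded)
  let ?d = "DIM('a)"
  define V where "V = unit_ball_vol (real ?d)"
  define t where "t k = inverse ((1 + real k) ^ (?d + 2))" for k :: nat
  define S where "S k y = ennreal (t k) * indicator (cball (0::'a) (real k + 1)) y" for k y
  show "(\<lambda>y::'a. inverse ((1 + norm y) ^ (?d + 2))) \<in> borel_measurable lborel"
    unfolding measurable_lborel2
    by (intro borel_measurable_continuous_onI continuous_intros) (auto, smt (verit) norm_ge_zero)
  have pointwise: "ennreal (norm (inverse ((1 + norm y) ^ (?d + 2)))) \<le> (\<Sum>k. S k y)" for y :: 'a
  proof -
    define k where "k = nat \<lfloor>norm y\<rfloor>"
    have k_le: "real k \<le> norm y" and le_k: "norm y \<le> real k + 1"
      unfolding k_def by (simp_all add: of_nat_nat)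
    have "(1 + real k) ^ (?d + 2) \<le> (1 + norm y) ^ (?d + 2)"
      using k_le by (intro power_mono) auto
    from le_imp_inverse_le[OF this] have "norm (inverse ((1 + norm y) ^ (?d + 2))) \<le> t k"
      unfolding t_def by (simp del: power_Suc inverse_mult_distrib)
    then have "ennreal (norm (inverse ((1 + norm y) ^ (?d + 2)))) \<le> S k y"
      using le_k by (simp add: S_def indicator_def del: norm_inverse power_Suc inverse_mult_distrib)
        (rule ennreal_leI)
    also have "\<dots> \<le> (\<Sum>k. S k y)"
      using sum_le_suminf[of "\<lambda>k. S k y" "{k}"] by simp
    finally show ?thesis .
  qed
  have shell: "t k * (real k + 1) ^ ?d = inverse (real (Suc k) ^ 2)" for k
  proof -
    have "t k * (real k + 1) ^ ?d = inverse ((1 + real k) ^ ?d * (1 + real k) ^ 2) * (1 + real k) ^ ?d"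
      unfolding t_def by (metis add.commute power_add)
    also have "\<dots> = inverse ((1 + real k) ^ 2)" by (simp add: power2_eq_square)
    finally show ?thesis by simp
  qed
  have summable: "summable (\<lambda>k. V * inverse (real (Suc k) ^ 2))"
    using summable_Suc_iff[of "\<lambda>n. inverse (real n ^ 2)"] inverse_power_summable[of 2, where 'a=real]
    by (intro summable_mult) (simp only:)
  have "(\<integral>\<^sup>+ (y::'a). ennreal (norm (inverse ((1 + norm y) ^ (?d + 2)))) \<partial>lborel)
      \<le> (\<integral>\<^sup>+ y. (\<Sum>k. S k y) \<partial>lborel)"
    by (rule nn_integral_mono) (rule pointwise)
  also have "\<dots> = (\<Sum>k. \<integral>\<^sup>+ y. S k y \<partial>lborel)"
    unfolding S_def
    by (rule nn_integral_suminf) (intro borel_measurable_times_ennreal borel_measurable_indicator; simp)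
  also have "\<dots> = (\<Sum>k. ennreal (V * inverse (real (Suc k) ^ 2)))"
  proof (rule suminf_cong)
    fix k
    have "(\<integral>\<^sup>+ y. S k y \<partial>lborel) = ennreal (t k) * emeasure lborel (cball (0::'a) (real k + 1))"
      unfolding S_def by (rule nn_integral_cmult_indicator) simp
    also have "\<dots> = ennreal (V * (t k * (real k + 1) ^ ?d))"
      by (subst emeasure_cball) (auto simp: V_def t_def ennreal_mult'[symmetric] mult_ac)
    finally show "(\<integral>\<^sup>+ y. S k y \<partial>lborel) = ennreal (V * inverse (real (Suc k) ^ 2))"
      by (simp only: shell)
  qed
  also have "\<dots> = ennreal (\<Sum>k. V * inverse (real (Suc k) ^ 2))"
    by (rule suminf_ennreal2) (use summable in \<open>auto simp: V_def\<close>)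
  also have "\<dots> < \<infinity>" by simp
  finally show "(\<integral>\<^sup>+ (y::'a). ennreal (norm (inverse ((1 + norm y) ^ (?d + 2)))) \<partial>lborel) < \<infinity>" .
qed

lemma le_mult_power_of_mult_powr_minus_le:
  fixes x :: real
  assumes "c * x powr (- real n) \<le> m" and "x > 0"
  shows "c \<le> m * x ^ n"
proof -
  have "x powr real n = x ^ n" using \<open>x > 0\<close> by (rule powr_realpow)
  then have "c / x ^ n \<le> m"
    using assms(1) by (simp only: powr_minus divide_inverse)
  then show ?thesis using \<open>x > 0\<close> by (simp add: divide_le_eq)
qed

lemma schwartz_integrable_weighted:
  fixes K :: "'a::euclidean_space \<Rightarrow> complex"
  assumes "schwartz K"
  shows "integrable lborel (\<lambda>y. norm (K y) * (1 + norm y ^ N))"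
proof -
  let ?d = "DIM('a)"
  from assms have decay: "\<And>N::nat. \<exists>M. \<forall>x. (1 + norm x) ^ N * norm (K x) \<le> M"
    and diff: "\<And>x. \<exists>K'. (K has_derivative K') (at x)"
    by (cases rule: schwartz.cases; blast)+
  obtain M where M: "\<And>y. (1 + norm y) ^ (N + (?d + 2)) * norm (K y) \<le> M"
    using decay[of "N + (?d + 2)"] by blast
  have bound: "norm (K y) * (1 + norm y ^ N) \<le> 2 * M * inverse ((1 + norm y) ^ (?d + 2))" for y
  proof -
    define a where "a = 1 + norm y"
    define e where "e = a ^ (?d + 2)"
    have a: "a \<ge> 1" unfolding a_def by simp
    then have e: "e > 0" unfolding e_def by simp
    have "norm y ^ N \<le> a ^ N" unfolding a_def by (intro power_mono) auto
    then have "1 + norm y ^ N \<le> 2 * a ^ N"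
      using one_le_power[OF a, of N] by linarith
    then have "norm (K y) * (1 + norm y ^ N) \<le> norm (K y) * (2 * a ^ N)"
      by (intro mult_left_mono) auto
    also have "\<dots> = 2 * (a ^ N * e * norm (K y)) * inverse e"
      using e by (simp add: field_simps)
    also have "\<dots> = 2 * ((1 + norm y) ^ (N + (?d + 2)) * norm (K y)) * inverse e"
      unfolding e_def a_def by (simp only: power_add)
    also have "\<dots> \<le> 2 * M * inverse e"
      using M[of y] e by (intro mult_right_mono) auto
    finally show ?thesis unfolding e_def a_def .
  qed
  have "integrable lborel (\<lambda>y::'a. 2 * M * inverse ((1 + norm y) ^ (?d + 2)))"
    by (intro integrable_mult_right integrable_inverse_one_plus_norm_power)
  moreover have "continuous_on UNIV K"
    using diff has_derivative_continuous by (blast intro: continuous_at_imp_continuous_on)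
  then have "(\<lambda>y. norm (K y) * (1 + norm y ^ N)) \<in> borel_measurable lborel"
    unfolding measurable_lborel2 by (intro borel_measurable_continuous_onI continuous_intros)
  moreover have "AE y in lborel. norm (norm (K y) * (1 + norm y ^ N))
      \<le> norm (2 * M * inverse ((1 + norm y) ^ (?d + 2)))"
  proof (intro AE_I2)
    fix y :: 'a
    have "norm (norm (K y) * (1 + norm y ^ N)) = norm (K y) * (1 + norm y ^ N)" by simp
    also have "\<dots> \<le> 2 * M * inverse ((1 + norm y) ^ (?d + 2))" by (rule bound)
    also have "\<dots> \<le> norm (2 * M * inverse ((1 + norm y) ^ (?d + 2)))" by simp
    finally show "norm (norm (K y) * (1 + norm y ^ N)) \<le> norm (2 * M * inverse ((1 + norm y) ^ (?d + 2)))" .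
  qed
  ultimately show ?thesis
    by (rule Bochner_Integration.integrable_bound)
qed

lemma localized_unit_ball_weighted_bound:
  fixes f :: "'a::euclidean_space \<Rightarrow> real"
  assumes "localized_unit_ball f"
  shows "\<exists>A. \<forall>x. \<bar>f x\<bar> * (1 + norm x) ^ (10 * DIM('a)) \<le> A"
proof -
  let ?D = "10 * DIM('a)"
  obtain C where C: "\<And>x. \<bar>f x\<bar> \<le> C \<and> (x \<noteq> 0 \<longrightarrow> \<bar>f x\<bar> \<le> C * norm x powr (- real ?D))"
    using assms unfolding localized_unit_ball_def by blast
  have "\<bar>f x\<bar> * (1 + norm x) ^ ?D \<le> C * 2 ^ ?D" for x
  proof (cases "norm x \<le> 1")
    case True
    have "(1 + norm x) ^ ?D \<le> 2 ^ ?D" using True by (intro power_mono) auto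
    then show ?thesis using C[of x] by (intro mult_mono) auto
  next
    case False
    then have "x \<noteq> 0" by auto
    have "norm x ^ ?D = norm x powr real ?D" using False by (intro powr_realpow[symmetric]) auto
    then have "\<bar>f x\<bar> * norm x ^ ?D \<le> C * norm x powr (- real ?D) * norm x powr real ?D"
      using C[of x] \<open>x \<noteq> 0\<close> by (simp only:) (intro mult_right_mono, auto)
    also have "\<dots> = C" using \<open>x \<noteq> 0\<close> by (simp add: powr_minus)
    finally have "\<bar>f x\<bar> * norm x ^ ?D \<le> C" .
    have "(1 + norm x) ^ ?D \<le> 2 ^ ?D * norm x ^ ?D"
      using False power_mono[of "1 + norm x" "2 * norm x" ?D] by (simp add: power_mult_distrib)
    then have "\<bar>f x\<bar> * (1 + norm x) ^ ?D \<le> \<bar>f x\<bar> * (2 ^ ?D * norm x ^ ?D)"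
      by (intro mult_left_mono) auto
    also have "\<dots> = 2 ^ ?D * (\<bar>f x\<bar> * norm x ^ ?D)" by (simp only: mult_ac)
    also have "\<dots> \<le> 2 ^ ?D * C" using \<open>\<bar>f x\<bar> * norm x ^ ?D \<le> C\<close> by (intro mult_left_mono) auto
    finally show ?thesis by (simp only: mult_ac)
  qed
  then show ?thesis by blast
qed

text \<open>Peetre's inequality 1 + |z| \<le> (1 + |z - y|)(1 + |y|) is what turns the two-sided
  bound into a translation estimate.\<close>
lemma translate_le_of_polynomial_weight_bounds:
  fixes \<mu> :: "'a::real_normed_vector \<Rightarrow> real"
  assumes upper: "\<And>w. \<mu> w * (1 + norm w) ^ D \<le> A"
    and lower: "\<And>z. c \<le> \<mu> z * (1 + norm z) ^ D"
    and "c > 0"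
  shows "\<mu> (z - y) \<le> A * 2 ^ D / c * (1 + norm y ^ D) * \<mu> z"
proof -
  have pos: "\<mu> w > 0" for w
  proof (rule ccontr)
    assume "\<not> \<mu> w > 0"
    then have "\<mu> w * (1 + norm w) ^ D \<le> 0" by (simp add: mult_nonpos_nonneg)
    with lower[of w] \<open>c > 0\<close> show False by linarith
  qed
  have "(1 + norm (z - y)) * (1 + norm y) = 1 + norm (z - y) + norm y + norm (z - y) * norm y"
    by (simp add: algebra_simps)
  moreover have "0 \<le> norm (z - y) * norm y" by simp
  ultimately have "1 + norm z \<le> (1 + norm (z - y)) * (1 + norm y)"
    using norm_triangle_sub[of z y] by linarith
  then have weight: "(1 + norm z) ^ D \<le> (1 + norm (z - y)) ^ D * (1 + norm y) ^ D"
    by (metis power_mono power_mult_distrib norm_ge_zero add_nonneg_nonneg zero_le_one)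
  have "c * \<mu> (z - y) \<le> \<mu> z * (1 + norm z) ^ D * \<mu> (z - y)"
    using lower[of z] pos[of "z - y"] by (intro mult_right_mono) auto
  also have "\<dots> \<le> \<mu> z * ((1 + norm (z - y)) ^ D * (1 + norm y) ^ D) * \<mu> (z - y)"
    using weight pos[of z] pos[of "z - y"] by (intro mult_right_mono mult_left_mono) auto
  also have "\<dots> = (\<mu> (z - y) * (1 + norm (z - y)) ^ D) * ((1 + norm y) ^ D * \<mu> z)"
    by (simp only: mult_ac)
  also have "\<dots> \<le> A * ((1 + norm y) ^ D * \<mu> z)"
    using upper[of "z - y"] pos[of z] by (intro mult_right_mono) auto
  also have "\<dots> \<le> A * (2 ^ D * (1 + norm y ^ D) * \<mu> z)"
    using one_plus_power_le[of "norm y" D] pos[of z] upper[of 0] pos[of 0]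
    by (intro mult_left_mono mult_right_mono) (auto intro: order_trans[rotated])
  finally show ?thesis
    using \<open>c > 0\<close> by (simp add: pos_le_divide_eq field_simps)
qed

lemma mu_set_translate_le:
  assumes translate: "\<And>z. \<mu> (z - y) \<le> L * \<mu> z"
    and summable: "\<And>z. (\<lambda>b. \<mu> (z - b)) summable_on B"
  shows "mu_set \<mu> B (x - y) \<le> L * mu_set \<mu> B x"
proof -
  have "mu_set \<mu> B (x - y) \<le> (\<Sum>\<^sub>\<infinity>b\<in>B. L * \<mu> (x - b))"
    unfolding mu_set_def
  proof (rule infsum_mono)
    show "\<mu> (x - y - b) \<le> L * \<mu> (x - b)" for b
    proof -
      have "x - y - b = x - b - y" by (simp add: algebra_simps)
      then show ?thesis by (simp only: translate)
    qed
    show "(\<lambda>b. \<mu> (x - y - b)) summable_on B" by (rule summable)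
    show "(\<lambda>b. L * \<mu> (x - b)) summable_on B" by (rule summable_on_cmult_right[OF summable])
  qed
  also have "\<dots> = L * mu_set \<mu> B x"
    unfolding mu_set_def by (rule infsum_cmult_right')
  finally show ?thesis .
qed

lemma mu_set_nonneg: "(\<And>x. 0 \<le> \<mu> x) \<Longrightarrow> 0 \<le> mu_set \<mu> B x"
  unfolding mu_set_def by (rule infsum_nonneg)

lemma norm_conv_le:
  assumes "\<And>y. 0 \<le> u (x - y)"
    and "\<And>y. u (x - y) \<le> w y * c"
    and "integrable lborel (\<lambda>y. norm (K y) * w y)"
  shows "norm (conv K u x) \<le> (\<integral>y. norm (K y) * w y \<partial>lborel) * c"
proof -
  let ?f = "\<lambda>y. K y * complex_of_real (u (x - y))"
  have bound: "norm (?f y) \<le> norm (K y) * w y * c" for y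
    using assms(1,2)[of y] by (simp add: norm_mult mult.assoc mult_left_mono)
  have "(\<integral>y. norm (K y) * w y \<partial>lborel) * c = (\<integral>y. norm (K y) * w y * c \<partial>lborel)"
    by simp
  moreover have "norm (integral\<^sup>L lborel ?f) \<le> (\<integral>y. norm (K y) * w y * c \<partial>lborel)"
  proof (cases "integrable lborel ?f")
    case True
    then show ?thesis
      using bound by (intro Bochner_Integration.integral_norm_bound_integral integrable_mult_left assms(3))
  next
    case False
    text \<open>The Bochner integral of a non-integrable function is 0 by convention.\<close>
    have "0 \<le> norm (K y) * w y * c" for y using bound[of y] by (rule order_trans[OF norm_ge_zero])
    moreover have "integral\<^sup>L lborel ?f = 0"
      using False by (rule not_integrable_integral_eq)
    ultimately show ?thesis
      by (simp only: norm_zero) (rule integral_nonneg_AE, simp)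
  qed
  ultimately show ?thesis unfolding conv_def by simp
qed

theorem lemma1p4:
  fixes \<mu> :: "'a::euclidean_space \<Rightarrow> real"
  assumes pos: "\<And>x. \<mu> x > 0"
    and loc: "localized_unit_ball \<mu>"
    and partition: "\<And>x. ((\<lambda>a. \<mu> (x - a)) has_sum 1) int_lattice"
    and lower: "\<exists>c>0. \<forall>x. \<mu> x \<ge> c * (1 + norm x) powr (- real (10 * DIM('a)))"
  shows "\<exists>C>0. \<forall>K B x. schwartz K \<longrightarrow> B \<subseteq> int_lattice \<longrightarrow>
           norm (conv K (mu_set \<mu> B) x)
             \<le> C * (\<integral>y. norm (K y) * (1 + norm y ^ (10 * DIM('a))) \<partial>lborel) * mu_set \<mu> B x"
proof -
  let ?D = "10 * DIM('a)"
  obtain A where A: "\<And>w. \<mu> w * (1 + norm w) ^ ?D \<le> A"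
    using localized_unit_ball_weighted_bound[OF loc] pos by (metis abs_of_pos)
  obtain c where "c > 0" and c: "\<And>z. c * (1 + norm z) powr (- real ?D) \<le> \<mu> z"
    using lower by blast
  have c': "c \<le> \<mu> z * (1 + norm z) ^ ?D" for z
    using c[of z] by (rule le_mult_power_of_mult_powr_minus_le) (simp add: add_pos_nonneg)
  define C where "C = A * 2 ^ ?D / c"
  have "C > 0"
    using A[of 0] pos[of 0] \<open>c > 0\<close> unfolding C_def by simp
  have translate: "\<mu> (z - y) \<le> C * (1 + norm y ^ ?D) * \<mu> z" for z y
    unfolding C_def using A c' \<open>c > 0\<close> by (rule translate_le_of_polynomial_weight_bounds)
  show ?thesis
  proof (intro exI[of _ C] conjI allI impI)
    fix K :: "'a \<Rightarrow> complex" and B :: "'a set" and x :: 'a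
    assume K: "schwartz K" and B: "B \<subseteq> int_lattice"
    have "mu_set \<mu> B (x - y) \<le> C * (1 + norm y ^ ?D) * mu_set \<mu> B x" for y
      using translate summable_on_subset_banach[OF has_sum_imp_summable[OF partition] B]
      by (rule mu_set_translate_le)
    moreover have "0 \<le> mu_set \<mu> B z" for z
      using pos by (intro mu_set_nonneg less_imp_le)
    ultimately have "norm (conv K (mu_set \<mu> B) x)
        \<le> (\<integral>y. norm (K y) * (1 + norm y ^ ?D) \<partial>lborel) * (C * mu_set \<mu> B x)"
      by (intro norm_conv_le schwartz_integrable_weighted K) (simp_all add: mult_ac)
    then show "norm (conv K (mu_set \<mu> B) x)
        \<le> C * (\<integral>y. norm (K y) * (1 + norm y ^ ?D) \<partial>lborel) * mu_set \<mu> B x"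
      by (simp only: mult_ac)
  qed (rule \<open>C > 0\<close>)
qed

end
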